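(* The canonical model $\mathcal M_c=(|\mathcal M_c|,\preccurlyeq_c,S_c,\ell_c)$ is a deterministic weak $\mathcal L_\Diamond$-quasimodel.
   Context: $\mathcal L_\Diamond$ is the propositional language with $\bot,\wedge,\vee,\to$ and unary modalities $\bigcirc$, $\Diamond$. ${\sf ITL}^0_\Diamond$ is the logic axiomatized by all intuitionistic propositional tautologies, $\neg\bigcirc\bot$, $\bigcirc\varphi\wedge\bigcirc\psi\to\bigcirc(\varphi\wedge\psi)$, $\bigcirc(\varphi\vee\psi)\to\bigcirc\varphi\vee\bigcirc\psi$, $\bigcirc(\varphi\to\psi)\to(\bigcirc\varphi\to\bigcirc\psi)$, $\varphi\vee\bigcirc\Diamond\varphi\to\Diamond\varphi$, closed under modus ponens and the rules $\varphi/\bigcirc\varphi$, $(\varphi\to\psi)/(\Diamond\varphi\to\Diamond\psi)$, $(\bigcirc\varphi\to\varphi)/(\Diamond\varphi\to\varphi)$. $\Gamma\vdash\Delta$ means ${\sf ITL}^0_\Diamond\vdash\bigwedge\Gamma'\to\bigvee\Delta'$ for some finite $\Gamma'\subseteq\Gamma$, $\Delta'\subseteq\Delta$. A prime type is a pair $\Phi=(\Phi^-,\Phi^+)$ of sets of formulas with $\Phi^-\cup\Phi^+=\mathcal L_\Diamond$ and $\Phi^+\not\vdash\Phi^-$. For $\Sigma$ closed under subformulas, a $\Sigma$-type is a pair $\Phi=(\Phi^-;\Phi^+)$ of subsets of $\Sigma$ with: $\Phi^-\cap\Phi^+=\varnothing$; $\Phi^-\cup\Phi^+=\Sigma$; $\bot\notin\Phi^+$;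 $\varphi\wedge\psi\in\Phi^+$ iff $\varphi,\psi\in\Phi^+$; $\varphi\vee\psi\in\Phi^+$ iff $\varphi\in\Phi^+$ or $\psi\in\Phi^+$; if $\varphi\to\psi\in\Phi^+$ then $\varphi\in\Phi^-$ or $\psi\in\Phi^+$; if $\Diamond\varphi\in\Phi^-$ then $\varphi\in\Phi^-$. $\Phi\preccurlyeq_T\Psi$ iff $\Phi^+\subseteq\Psi^+$. $\Phi\,S_T\,\Psi$ iff for all $\varphi$: $\bigcirc\varphi\in\Phi^+\Rightarrow\varphi\in\Psi^+$; $\bigcirc\varphi\in\Phi^-\Rightarrow\varphi\in\Psi^-$; ($\Diamond\varphi\in\Phi^+$ and $\varphi\in\Phi^-$) $\Rightarrow\Diamond\varphi\in\Psi^+$; $\Diamond\varphi\in\Phi^-\Rightarrow\Diamond\varphi\in\Psi^-$. A $\Sigma$-labelled frame is $(W,\preccurlyeq,\ell)$ with $\preccurlyeq$ a partial order, $\ell$ mapping $W$ to $\Sigma$-types, $w\preccurlyeq v\Rightarrow\ell(w)\preccurlyeq_T\ell(v)$, and whenever $\varphi\to\psi\in\ell^-(w)$ there is $v\succcurlyeq w$ with $\varphi\in\ell^+(v)$, $\psi\in\ell^-(v)$. A weak $\Sigma$-quasimodel is $(W,\preccurlyeq,S,\ell)$ with $(W,\preccurlyeq,\ell)$ a $\Sigma$-labelled frame and $S\subseteq W\times W$ forward-confluent (if $w\preccurlyeq w'$ and $w\,S\,v$ then some $v'\succcurlyeq v$ has $w'\,S\,v'$) and sensible ($w\,S\,v\Rightarrow\ell(w)\,S_T\,\ell(v)$);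 it is deterministic if $S$ is a function. The canonical model $\mathcal M_c$: domain the set of prime types, $\preccurlyeq_c$ is $\preccurlyeq_T$ restricted to prime types, $S_c$ is $S_T$ restricted to prime types, $\ell_c$ is the identity. *)

theory Defs
  imports Main
begin

datatype fm =
    Var nat
  | Bot
  | And fm fm
  | Or fm fm
  | Imp fm fm
  | Next fm
  | Dia fm

definition Top :: fm where "Top = Imp Bot Bot"

text \<open>Intuitionistic propositional tautologies are generated by a standard complete
Hilbert axiomatisation of IPC (all schemata instantiated over L_Diamond) together with
modus ponens.\<close>

inductive prov :: "fm \<Rightarrow> bool" where
  ax_k: "prov (Imp p (Imp q p))"
| ax_s: "prov (Imp (Imp p (Imp q r)) (Imp (Imp p q) (Imp p r)))"
| ax_and1: "prov (Imp (And p q) p)"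
| ax_and2: "prov (Imp (And p q) q)"
| ax_andI: "prov (Imp p (Imp q (And p q)))"
| ax_or1: "prov (Imp p (Or p q))"
| ax_or2: "prov (Imp q (Or p q))"
| ax_orE: "prov (Imp (Imp p r) (Imp (Imp q r) (Imp (Or p q) r)))"
| ax_efq: "prov (Imp Bot p)"
| ax_nnext: "prov (Imp (Next Bot) Bot)"
| ax_next_and: "prov (Imp (And (Next p) (Next q)) (Next (And p q)))"
| ax_next_or: "prov (Imp (Next (Or p q)) (Or (Next p) (Next q)))"
| ax_next_imp: "prov (Imp (Next (Imp p q)) (Imp (Next p) (Next q)))"
| ax_dia_fix: "prov (Imp (Or p (Next (Dia p))) (Dia p))"
| mp: "prov (Imp p q) \<Longrightarrow> prov p \<Longrightarrow> prov q"
| nec: "prov p \<Longrightarrow> prov (Next p)"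
| dia_mono: "prov (Imp p q) \<Longrightarrow> prov (Imp (Dia p) (Dia q))"
| dia_ind: "prov (Imp (Next p) p) \<Longrightarrow> prov (Imp (Dia p) p)"

fun Conj :: "fm list \<Rightarrow> fm" where
  "Conj [] = Top"
| "Conj (p # ps) = And p (Conj ps)"

fun Disj :: "fm list \<Rightarrow> fm" where
  "Disj [] = Bot"
| "Disj (p # ps) = Or p (Disj ps)"

definition derives :: "fm set \<Rightarrow> fm set \<Rightarrow> bool" where
  "derives \<Gamma> \<Delta> \<longleftrightarrow>
     (\<exists>xs ys. set xs \<subseteq> \<Gamma> \<and> set ys \<subseteq> \<Delta> \<and> prov (Imp (Conj xs) (Disj ys)))"

type_synonym ftype = "fm set \<times> fm set"

abbreviation tminus :: "ftype \<Rightarrow> fm set" where "tminus \<Phi> \<equiv> fst \<Phi>"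
abbreviation tplus :: "ftype \<Rightarrow> fm set" where "tplus \<Phi> \<equiv> snd \<Phi>"

definition prime_type :: "ftype \<Rightarrow> bool" where
  "prime_type \<Phi> \<longleftrightarrow> tminus \<Phi> \<union> tplus \<Phi> = UNIV \<and> \<not> derives (tplus \<Phi>) (tminus \<Phi>)"

definition is_type :: "fm set \<Rightarrow> ftype \<Rightarrow> bool" where
  "is_type \<Sigma> \<Phi> \<longleftrightarrow>
     tminus \<Phi> \<subseteq> \<Sigma> \<and> tplus \<Phi> \<subseteq> \<Sigma> \<and>
     tminus \<Phi> \<inter> tplus \<Phi> = {} \<and>
     tminus \<Phi> \<union> tplus \<Phi> = \<Sigma> \<and>
     Bot \<notin> tplus \<Phi> \<and>
     (\<forall>p q. And p q \<in> \<Sigma> \<longrightarrow> (And p q \<in> tplus \<Phi> \<longleftrightarrow> p \<in> tplus \<Phi> \<and> q \<in> tplus \<Phi>)) \<and>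
     (\<forall>p q. Or p q \<in> \<Sigma> \<longrightarrow> (Or p q \<in> tplus \<Phi> \<longleftrightarrow> p \<in> tplus \<Phi> \<or> q \<in> tplus \<Phi>)) \<and>
     (\<forall>p q. Imp p q \<in> tplus \<Phi> \<longrightarrow> p \<in> tminus \<Phi> \<or> q \<in> tplus \<Phi>) \<and>
     (\<forall>p. Dia p \<in> tminus \<Phi> \<longrightarrow> p \<in> tminus \<Phi>)"

definition type_le :: "ftype \<Rightarrow> ftype \<Rightarrow> bool" where
  "type_le \<Phi> \<Psi> \<longleftrightarrow> tplus \<Phi> \<subseteq> tplus \<Psi>"

definition type_S :: "ftype \<Rightarrow> ftype \<Rightarrow> bool" where
  "type_S \<Phi> \<Psi> \<longleftrightarrow>
     (\<forall>p. Next p \<in> tplus \<Phi> \<longrightarrow> p \<in> tplus \<Psi>) \<and>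
     (\<forall>p. Next p \<in> tminus \<Phi> \<longrightarrow> p \<in> tminus \<Psi>) \<and>
     (\<forall>p. Dia p \<in> tplus \<Phi> \<and> p \<in> tminus \<Phi> \<longrightarrow> Dia p \<in> tplus \<Psi>) \<and>
     (\<forall>p. Dia p \<in> tminus \<Phi> \<longrightarrow> Dia p \<in> tminus \<Psi>)"

definition partial_order_on' :: "'w set \<Rightarrow> ('w \<Rightarrow> 'w \<Rightarrow> bool) \<Rightarrow> bool" where
  "partial_order_on' W le \<longleftrightarrow>
     (\<forall>w\<in>W. le w w) \<and>
     (\<forall>u\<in>W. \<forall>v\<in>W. \<forall>w\<in>W. le u v \<longrightarrow> le v w \<longrightarrow> le u w) \<and>
     (\<forall>u\<in>W. \<forall>v\<in>W. le u v \<longrightarrow> le v u \<longrightarrow> u = v)"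

definition labelled_frame ::
  "fm set \<Rightarrow> 'w set \<Rightarrow> ('w \<Rightarrow> 'w \<Rightarrow> bool) \<Rightarrow> ('w \<Rightarrow> ftype) \<Rightarrow> bool" where
  "labelled_frame \<Sigma> W le lab \<longleftrightarrow>
     partial_order_on' W le \<and>
     (\<forall>w\<in>W. is_type \<Sigma> (lab w)) \<and>
     (\<forall>w\<in>W. \<forall>v\<in>W. le w v \<longrightarrow> type_le (lab w) (lab v)) \<and>
     (\<forall>w\<in>W. \<forall>p q. Imp p q \<in> tminus (lab w) \<longrightarrow>
        (\<exists>v\<in>W. le w v \<and> p \<in> tplus (lab v) \<and> q \<in> tminus (lab v)))"

definition forward_confluent ::
  "'w set \<Rightarrow> ('w \<Rightarrow> 'w \<Rightarrow> bool) \<Rightarrow> ('w \<Rightarrow> 'w \<Rightarrow> bool) \<Rightarrow> bool" where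
  "forward_confluent W le S \<longleftrightarrow>
     (\<forall>w\<in>W. \<forall>w'\<in>W. \<forall>v\<in>W. le w w' \<and> S w v \<longrightarrow> (\<exists>v'\<in>W. le v v' \<and> S w' v'))"

definition sensible :: "'w set \<Rightarrow> ('w \<Rightarrow> 'w \<Rightarrow> bool) \<Rightarrow> ('w \<Rightarrow> ftype) \<Rightarrow> bool" where
  "sensible W S lab \<longleftrightarrow> (\<forall>w\<in>W. \<forall>v\<in>W. S w v \<longrightarrow> type_S (lab w) (lab v))"

definition weak_quasimodel ::
  "fm set \<Rightarrow> 'w set \<Rightarrow> ('w \<Rightarrow> 'w \<Rightarrow> bool) \<Rightarrow> ('w \<Rightarrow> 'w \<Rightarrow> bool) \<Rightarrow> ('w \<Rightarrow> ftype) \<Rightarrow> bool" where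
  "weak_quasimodel \<Sigma> W le S lab \<longleftrightarrow>
     labelled_frame \<Sigma> W le lab \<and> forward_confluent W le S \<and> sensible W S lab"

definition deterministic :: "'w set \<Rightarrow> ('w \<Rightarrow> 'w \<Rightarrow> bool) \<Rightarrow> bool" where
  "deterministic W S \<longleftrightarrow> (\<forall>w\<in>W. \<exists>!v. v \<in> W \<and> S w v)"

definition Wc :: "ftype set" where "Wc = {\<Phi>. prime_type \<Phi>}"
definition le_c :: "ftype \<Rightarrow> ftype \<Rightarrow> bool" where "le_c = type_le"
definition S_c :: "ftype \<Rightarrow> ftype \<Rightarrow> bool" where "S_c = type_S"
definition l_c :: "ftype \<Rightarrow> ftype" where "l_c = id"

end

theory Submission
  imports Defs
begin

text \<open>A prime type is determined by its positive part, which is a deductively closed set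
with the disjunction property; hence the usual truth conditions hold, and the
Lindenbaum lemma supplies the witnesses required for refuted implications. Writing
\<open>succ \<Phi>\<close> for \<open>({p. \<bigcirc>p \<in> \<Phi>\<^sup>-}, {p. \<bigcirc>p \<in> \<Phi>\<^sup>+})\<close>, the axioms for \<open>\<bigcirc>\<close> make
\<open>succ \<Phi>\<close> prime whenever \<open>\<Phi>\<close> is, and since a sensible successor of \<open>\<Phi>\<close> must contain
\<open>succ \<Phi>\<close> on both sides it is equal to it: \<open>S\<^sub>c\<close> is the function \<open>succ\<close>. The
\<open>\<Diamond>\<close>-clauses of \<open>S\<^sub>T\<close> follow from the derivable unfolding
\<open>\<Diamond>p \<rightarrow> p \<or> \<bigcirc>\<Diamond>p\<close>, and forward confluence from the monotonicity of \<open>succ\<close>.\<close>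

inductive prov_from :: "fm set \<Rightarrow> fm \<Rightarrow> bool" for G where
  hyp: "p \<in> G \<Longrightarrow> prov_from G p"
| prov: "prov p \<Longrightarrow> prov_from G p"
| mp: "prov_from G (Imp p q) \<Longrightarrow> prov_from G p \<Longrightarrow> prov_from G q"

lemma prov_imp_refl: "prov (Imp p p)"
  using prov.mp[OF prov.mp[OF prov.ax_s[of p "Imp p p" p] prov.ax_k[of p "Imp p p"]] prov.ax_k[of p p]] .

lemma prov_Top: "prov Top"
  unfolding Top_def by (rule prov.ax_efq)

lemma prov_from_mono: "prov_from G p \<Longrightarrow> G \<subseteq> H \<Longrightarrow> prov_from H p"
  by (induction rule: prov_from.induct) (auto intro: prov_from.intros)

lemma prov_from_rule: "prov (Imp p q) \<Longrightarrow> prov_from G p \<Longrightarrow> prov_from G q"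
  by (meson prov_from.mp prov_from.prov)

lemma prov_from_deduction: "prov_from (insert p G) q \<Longrightarrow> prov_from G (Imp p q)"
proof (induction rule: prov_from.induct)
  case (hyp r)
  show ?case
  proof (cases "r = p")
    case True
    then show ?thesis by (simp add: prov_from.prov prov_imp_refl)
  next
    case False
    with hyp have "prov_from G r" by (auto intro: prov_from.hyp)
    then show ?thesis by (rule prov_from_rule[OF prov.ax_k])
  qed
next
  case (prov r)
  then show ?case by (meson prov_from.prov prov_from_rule prov.ax_k)
next
  case (mp r s)
  then show ?case by (meson prov_from.mp prov_from_rule prov.ax_s)
qed

lemma prov_from_empty: "prov_from {} p \<Longrightarrow> prov p"
  by (induction rule: prov_from.induct) (auto intro: prov.mp)

lemma prov_imp_of_prov_from_singleton: "prov_from {p} q \<Longrightarrow> prov (Imp p q)"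
  using prov_from_deduction[of p "{}" q] prov_from_empty by simp

lemma prov_from_finite: "prov_from G p \<Longrightarrow> \<exists>xs. set xs \<subseteq> G \<and> prov_from (set xs) p"
proof (induction rule: prov_from.induct)
  case (hyp p)
  then show ?case by (intro exI[of _ "[p]"]) (auto intro: prov_from.hyp)
next
  case (prov p)
  then show ?case by (intro exI[of _ "[]"]) (auto intro: prov_from.prov)
next
  case (mp p q)
  then obtain xs ys where "set xs \<subseteq> G" "prov_from (set xs) (Imp p q)"
    and "set ys \<subseteq> G" "prov_from (set ys) p" by blast
  then show ?case
    by (intro exI[of _ "xs @ ys"])
       (auto intro: prov_from.mp prov_from_mono[of "set xs"] prov_from_mono[of "set ys"])
qed

lemma prov_from_Conj: "prov_from (set xs) (Conj xs)"
proof (induction xs)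
  case Nil
  then show ?case by (simp add: prov_from.prov prov_Top)
next
  case (Cons x xs)
  have "prov_from (set (x # xs)) (Conj xs)" using prov_from_mono[OF Cons] by auto
  then show ?case
    using prov_from.mp[OF prov_from_rule[OF prov.ax_andI prov_from.hyp]] by simp
qed

lemma prov_Conj_imp: "prov_from (set xs) p \<Longrightarrow> prov (Imp (Conj xs) p)"
proof (induction xs arbitrary: p)
  case Nil
  then show ?case using prov.mp[OF prov.ax_k] prov_from_empty by simp
next
  case (Cons x xs)
  then have IH: "prov (Imp (Conj xs) (Imp x p))" using prov_from_deduction[of x "set xs"] by simp
  let ?c = "And x (Conj xs)"
  have c: "prov_from {?c} ?c" by (simp add: prov_from.hyp)
  have "prov_from {?c} p"
    using prov_from.mp[OF prov_from_rule[OF IH prov_from_rule[OF prov.ax_and2 c]]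
        prov_from_rule[OF prov.ax_and1 c]] .
  then show ?case by (simp add: prov_imp_of_prov_from_singleton)
qed

lemma prov_from_iff_Conj: "prov_from G p \<longleftrightarrow> (\<exists>xs. set xs \<subseteq> G \<and> prov (Imp (Conj xs) p))"
  by (meson prov_Conj_imp prov_from_Conj prov_from_finite prov_from_mono prov_from_rule)

lemma derives_iff_prov_from_Disj: "derives G D \<longleftrightarrow> (\<exists>ys. set ys \<subseteq> D \<and> prov_from G (Disj ys))"
  unfolding derives_def prov_from_iff_Conj by blast

lemma prov_from_disjE:
  "prov_from G (Imp p r) \<Longrightarrow> prov_from G (Imp q r) \<Longrightarrow> prov_from G (Or p q) \<Longrightarrow> prov_from G r"
  using prov_from.mp[OF prov_from.mp[OF prov_from_rule[OF prov.ax_orE]]] by blast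

lemma prov_from_imp_trans:
  assumes "prov_from G (Imp p q)" and "prov_from G (Imp q r)"
  shows "prov_from G (Imp p r)"
proof -
  have "prov_from (insert p G) q"
    using prov_from.mp[OF prov_from_mono[OF assms(1)] prov_from.hyp] by blast
  then have "prov_from (insert p G) r"
    using prov_from.mp[OF prov_from_mono[OF assms(2)]] by blast
  then show ?thesis by (rule prov_from_deduction)
qed

lemma prov_imp_trans: "prov (Imp p q) \<Longrightarrow> prov (Imp q r) \<Longrightarrow> prov (Imp p r)"
  by (rule prov_from_empty[OF prov_from_imp_trans[OF prov_from.prov prov_from.prov]])

lemma prov_from_imp_Disj: "p \<in> set ys \<Longrightarrow> prov_from G (Imp p (Disj ys))"
proof (induction ys)
  case (Cons y ys)
  show ?case
  proof (cases "p = y")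
    case True
    then show ?thesis by (simp add: prov_from.prov prov.ax_or1)
  next
    case False
    with Cons have "prov_from G (Imp p (Disj ys))" by simp
    then show ?thesis using prov_from_imp_trans[OF _ prov_from.prov[OF prov.ax_or2]] by simp
  qed
qed simp

lemma prov_from_Disj_mono: "set ys \<subseteq> set zs \<Longrightarrow> prov_from G (Imp (Disj ys) (Disj zs))"
proof (induction ys)
  case Nil
  then show ?case by (simp add: prov_from.prov prov.ax_efq)
next
  case (Cons y ys)
  let ?G = "insert (Or y (Disj ys)) G"
  have "prov_from G (Imp y (Disj zs))" and "prov_from G (Imp (Disj ys) (Disj zs))"
    using Cons by (simp_all add: prov_from_imp_Disj)
  then have "prov_from ?G (Disj zs)"
    using prov_from_disjE[OF prov_from_mono prov_from_mono prov_from.hyp, of G y "Disj zs" ?G]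
    by blast
  then show ?case by (simp add: prov_from_deduction)
qed

lemma prov_from_Or_Bot [simp]: "prov_from G (Or p Bot) \<longleftrightarrow> prov_from G p"
proof
  assume "prov_from G (Or p Bot)"
  moreover have "prov_from {Or p Bot} p"
    by (rule prov_from_disjE[OF prov_from.prov[OF prov_imp_refl] prov_from.prov[OF prov.ax_efq]])
       (simp add: prov_from.hyp)
  ultimately show "prov_from G p"
    using prov_from_rule[OF prov_imp_of_prov_from_singleton] by simp
qed (simp add: prov_from_rule[OF prov.ax_or1])

lemma derives_if_mem: "p \<in> G \<Longrightarrow> p \<in> D \<Longrightarrow> derives G D"
  unfolding derives_iff_prov_from_Disj
  by (intro exI[of _ "[p]"]) (simp add: prov_from.hyp)

lemma prov_Next_Conj: "prov (Imp (Conj (map Next xs)) (Next (Conj xs)))"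
proof (induction xs)
  case Nil
  show ?case using prov.mp[OF prov.ax_k prov.nec[OF prov_Top]] by simp
next
  case (Cons x xs)
  let ?h = "And (Next x) (Conj (map Next xs))"
  have h: "prov_from {?h} ?h" by (simp add: prov_from.hyp)
  have "prov_from {?h} (Next (Conj xs))"
    using prov_from_rule[OF Cons prov_from_rule[OF prov.ax_and2 h]] .
  then have "prov_from {?h} (Next (And x (Conj xs)))"
    using prov_from_rule[OF prov.ax_next_and prov_from.mp[OF prov_from_rule[OF prov.ax_andI
          prov_from_rule[OF prov.ax_and1 h]]]] by blast
  then show ?case by (simp add: prov_imp_of_prov_from_singleton)
qed

lemma prov_Next_Disj: "prov (Imp (Next (Disj ys)) (Disj (map Next ys)))"
proof (induction ys)
  case Nil
  show ?case using prov.ax_nnext by simp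
next
  case (Cons y ys)
  let ?h = "Next (Or y (Disj ys))" and ?c = "Or (Next y) (Disj (map Next ys))"
  have "prov_from {?h} (Or (Next y) (Next (Disj ys)))"
    by (simp add: prov_from_rule[OF prov.ax_next_or] prov_from.hyp)
  then have "prov_from {?h} ?c"
    by (rule prov_from_disjE[OF prov_from.prov[OF prov.ax_or1]
          prov_from_imp_trans[OF prov_from.prov[OF Cons] prov_from.prov[OF prov.ax_or2]]])
  then show ?case by (simp add: prov_imp_of_prov_from_singleton)
qed

lemma prov_Next_mono: "prov (Imp p q) \<Longrightarrow> prov (Imp (Next p) (Next q))"
  by (rule prov.mp[OF prov.ax_next_imp prov.nec])

lemma prov_imp_Dia: "prov (Imp p (Dia p))"
  by (rule prov_imp_of_prov_from_singleton)
     (simp add: prov_from_rule[OF prov.ax_dia_fix prov_from_rule[OF prov.ax_or1]] prov_from.hyp)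

lemma prov_Next_Dia_imp_Dia: "prov (Imp (Next (Dia p)) (Dia p))"
  by (rule prov_imp_of_prov_from_singleton)
     (simp add: prov_from_rule[OF prov.ax_dia_fix prov_from_rule[OF prov.ax_or2]] prov_from.hyp)

text \<open>The converse of the fixpoint axiom: \<open>p \<or> \<bigcirc>\<Diamond>p\<close> is closed under \<open>\<bigcirc>\<close>, so the
induction rule bounds \<open>\<Diamond>(p \<or> \<bigcirc>\<Diamond>p)\<close>, and hence \<open>\<Diamond>p\<close>, by it.\<close>

lemma prov_Dia_unfold: "prov (Imp (Dia p) (Or p (Next (Dia p))))"
proof -
  let ?c = "Or p (Next (Dia p))"
  have into_c: "prov_from {Next ?c} (Imp (Next q) ?c)" if "prov (Imp q (Dia p))" for q
    by (rule prov_from_imp_trans[OF prov_from.prov[OF prov_Next_mono[OF that]]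
          prov_from.prov[OF prov.ax_or2]])
  have "prov_from {Next ?c} (Or (Next p) (Next (Next (Dia p))))"
    by (simp add: prov_from_rule[OF prov.ax_next_or] prov_from.hyp)
  then have "prov_from {Next ?c} ?c"
    by (rule prov_from_disjE[OF into_c[OF prov_imp_Dia] into_c[OF prov_Next_Dia_imp_Dia]])
  then have "prov (Imp (Dia ?c) ?c)"
    by (intro prov.dia_ind prov_imp_of_prov_from_singleton)
  then show ?thesis
    by (rule prov_imp_trans[OF prov.dia_mono[OF prov.ax_or1]])
qed

lemma prime_type_tminus: "prime_type \<Phi> \<Longrightarrow> tminus \<Phi> = - tplus \<Phi>"
  unfolding prime_type_def using derives_if_mem by blast

lemma prime_type_eqI:
  "prime_type \<Phi> \<Longrightarrow> prime_type \<Psi> \<Longrightarrow> tplus \<Phi> = tplus \<Psi> \<Longrightarrow> \<Phi> = \<Psi>"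
  by (simp add: prime_type_tminus prod_eq_iff)

lemma prime_type_disjunction:
  assumes "prime_type \<Phi>" and "prov_from (tplus \<Phi>) (Disj ys)"
  shows "\<exists>p\<in>set ys. p \<in> tplus \<Phi>"
  using assms prime_type_tminus[OF assms(1)]
  unfolding prime_type_def derives_iff_prov_from_Disj by blast

lemma prime_type_closed: "prime_type \<Phi> \<Longrightarrow> prov_from (tplus \<Phi>) p \<Longrightarrow> p \<in> tplus \<Phi>"
  using prime_type_disjunction[of \<Phi> "[p]"] by simp

lemma prime_type_Or:
  assumes "prime_type \<Phi>" and "prov_from (tplus \<Phi>) (Or p q)"
  shows "p \<in> tplus \<Phi> \<or> q \<in> tplus \<Phi>"
proof -
  have "prov_from (tplus \<Phi>) (Disj [p, q])"
    by (rule prov_from_disjE[OF prov_from_imp_Disj prov_from_imp_Disj assms(2)]) auto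
  from prime_type_disjunction[OF assms(1) this] show ?thesis by auto
qed

lemma prime_type_is_type:
  assumes "prime_type \<Phi>"
  shows "is_type UNIV \<Phi>"
proof -
  note minus = prime_type_tminus[OF assms]
  note closed = prime_type_closed[OF assms]
  have "Bot \<notin> tplus \<Phi>"
    using prime_type_disjunction[OF assms, of "[]"] prov_from.hyp by fastforce
  moreover have "And p q \<in> tplus \<Phi> \<longleftrightarrow> p \<in> tplus \<Phi> \<and> q \<in> tplus \<Phi>" for p q
    by (meson closed prov.ax_and1 prov.ax_and2 prov.ax_andI prov_from.hyp prov_from.mp prov_from_rule)
  moreover have "Or p q \<in> tplus \<Phi> \<longleftrightarrow> p \<in> tplus \<Phi> \<or> q \<in> tplus \<Phi>" for p q
    by (meson closed prime_type_Or[OF assms] prov.ax_or1 prov.ax_or2 prov_from.hyp prov_from_rule)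
  moreover have "Imp p q \<in> tplus \<Phi> \<Longrightarrow> p \<in> tplus \<Phi> \<Longrightarrow> q \<in> tplus \<Phi>" for p q
    by (meson closed prov_from.hyp prov_from.mp)
  moreover have "p \<in> tplus \<Phi> \<Longrightarrow> Dia p \<in> tplus \<Phi>" for p
    by (meson closed prov_imp_Dia prov_from.hyp prov_from_rule)
  ultimately show ?thesis
    unfolding is_type_def minus by blast
qed

text \<open>By maximality every disjunction of formulas outside \<open>M\<close> implies, over \<open>M\<close>, a
disjunction of members of \<open>D\<close>; so a derivation of \<open>-M\<close> from \<open>M\<close> would yield one of \<open>D\<close>.\<close>

lemma maximal_non_deriving_prime:
  assumes nd: "\<not> derives M D"
    and maximal: "\<And>p. p \<notin> M \<Longrightarrow> derives (insert p M) D"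
  shows "prime_type (- M, M)"
proof -
  have "\<exists>ds. set ds \<subseteq> D \<and> prov_from M (Imp (Disj ys) (Disj ds))" if "set ys \<subseteq> - M" for ys
    using that
  proof (induction ys)
    case Nil
    show ?case by (intro exI[of _ "[]"]) (simp add: prov_from.prov prov_imp_refl)
  next
    case (Cons y ys)
    then obtain d2 where d2: "set d2 \<subseteq> D" "prov_from M (Imp (Disj ys) (Disj d2))" by auto
    from Cons.prems have "y \<notin> M" by simp
    then obtain d1 where d1: "set d1 \<subseteq> D" "prov_from (insert y M) (Disj d1)"
      using maximal unfolding derives_iff_prov_from_Disj by blast
    have "prov_from M (Imp y (Disj (d1 @ d2)))"
      using prov_from_imp_trans[OF prov_from_deduction[OF d1(2)] prov_from_Disj_mono] by simp
    moreover have "prov_from M (Imp (Disj ys) (Disj (d1 @ d2)))"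
      using prov_from_imp_trans[OF d2(2) prov_from_Disj_mono] by simp
    ultimately have "prov_from (insert (Or y (Disj ys)) M) (Disj (d1 @ d2))"
      using prov_from_disjE[OF prov_from_mono prov_from_mono prov_from.hyp] by blast
    then show ?case
      using d1(1) d2(1) by (intro exI[of _ "d1 @ d2"]) (simp add: prov_from_deduction)
  qed
  then have "\<not> derives M (- M)"
    using nd prov_from.mp unfolding derives_iff_prov_from_Disj by meson
  then show ?thesis unfolding prime_type_def by simp
qed

lemma derives_Union_chain:
  assumes "subset.chain A C" and "C \<noteq> {}" and "derives (\<Union>C) D"
  shows "\<exists>B\<in>C. derives B D"
proof -
  obtain xs ys where xs: "set xs \<subseteq> \<Union>C" "set ys \<subseteq> D" "prov (Imp (Conj xs) (Disj ys))"
    using assms(3) unfolding derives_def by blast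
  obtain B where "B \<in> C" "set xs \<subseteq> B"
    using finite_subset_Union_chain[OF _ xs(1) assms(2,1)] by blast
  then show ?thesis using xs(2,3) unfolding derives_def by blast
qed

lemma lindenbaum:
  assumes "\<not> derives G D"
  shows "\<exists>\<Phi>. prime_type \<Phi> \<and> G \<subseteq> tplus \<Phi> \<and> D \<subseteq> tminus \<Phi>"
proof -
  define A where "A = {H. G \<subseteq> H \<and> \<not> derives H D}"
  have "\<exists>U\<in>A. \<forall>X\<in>C. X \<subseteq> U" if "C \<in> chains A" for C
  proof (cases "C = {}")
    case True
    then show ?thesis using assms unfolding A_def by blast
  next
    case False
    have chain: "subset.chain A C" using that by (simp add: chains_alt_def)
    then have "C \<subseteq> A" by (simp add: subset_chain_def)
    with False have "\<Union>C \<in> A"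
      using derives_Union_chain[OF chain False] unfolding A_def by blast
    then show ?thesis by blast
  qed
  then obtain M where "M \<in> A" and M_max: "\<forall>X\<in>A. M \<subseteq> X \<longrightarrow> X = M"
    using Zorn_Lemma2[of A] by blast
  then have "G \<subseteq> M" and nd: "\<not> derives M D" unfolding A_def by auto
  moreover have "derives (insert p M) D" if "p \<notin> M" for p
    using M_max that \<open>G \<subseteq> M\<close> unfolding A_def by blast
  moreover have "D \<subseteq> - M" using nd derives_if_mem by blast
  ultimately show ?thesis
    using maximal_non_deriving_prime by (intro exI[of _ "(- M, M)"]) auto
qed

lemma prime_type_imp_witness:
  assumes "prime_type \<Phi>" and "Imp p q \<in> tminus \<Phi>"
  shows "\<exists>\<Psi>. prime_type \<Psi> \<and> type_le \<Phi> \<Psi> \<and> p \<in> tplus \<Psi> \<and> q \<in> tminus \<Psi>"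
proof -
  have "\<not> derives (insert p (tplus \<Phi>)) {q}"
  proof
    assume "derives (insert p (tplus \<Phi>)) {q}"
    then obtain ys where "set ys \<subseteq> {q}" "prov_from (insert p (tplus \<Phi>)) (Disj ys)"
      unfolding derives_iff_prov_from_Disj by blast
    then have "prov_from (insert p (tplus \<Phi>)) q"
      using prov_from.mp[OF prov_from_Disj_mono[of ys "[q]"]] by auto
    then have "Imp p q \<in> tplus \<Phi>"
      by (intro prime_type_closed[OF assms(1)] prov_from_deduction)
    then show False using assms prime_type_tminus by blast
  qed
  then show ?thesis
    using lindenbaum unfolding type_le_def by (metis insert_subset singleton_iff)
qed

definition succ :: "ftype \<Rightarrow> ftype" where
  "succ \<Phi> = ({p. Next p \<in> tminus \<Phi>}, {p. Next p \<in> tplus \<Phi>})"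

lemma succ_mono: "type_le \<Phi> \<Psi> \<Longrightarrow> type_le (succ \<Phi>) (succ \<Psi>)"
  unfolding type_le_def succ_def by auto

lemma prime_type_succ:
  assumes "prime_type \<Phi>"
  shows "prime_type (succ \<Phi>)"
proof -
  have "\<not> derives (tplus (succ \<Phi>)) (tminus (succ \<Phi>))"
  proof
    assume "derives (tplus (succ \<Phi>)) (tminus (succ \<Phi>))"
    then obtain xs ys where xs: "set xs \<subseteq> {p. Next p \<in> tplus \<Phi>}"
      and ys: "set ys \<subseteq> {p. Next p \<in> tminus \<Phi>}" and pr: "prov (Imp (Conj xs) (Disj ys))"
      unfolding derives_def succ_def by auto
    have "prov (Imp (Conj (map Next xs)) (Disj (map Next ys)))"
      by (rule prov_imp_trans[OF prov_imp_trans[OF prov_Next_Conj prov_Next_mono[OF pr]] prov_Next_Disj])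
    then have "derives (tplus \<Phi>) (tminus \<Phi>)"
      using xs ys unfolding derives_def by (intro exI[of _ "map Next xs"] exI[of _ "map Next ys"]) auto
    then show False using assms unfolding prime_type_def by blast
  qed
  moreover have "tminus (succ \<Phi>) \<union> tplus (succ \<Phi>) = UNIV"
    using prime_type_tminus[OF assms] by (auto simp: succ_def)
  ultimately show ?thesis unfolding prime_type_def by blast
qed

lemma type_S_succ:
  assumes "prime_type \<Phi>"
  shows "type_S \<Phi> (succ \<Phi>)"
proof -
  note minus = prime_type_tminus[OF assms]
  have "Next (Dia p) \<in> tplus \<Phi>" if "Dia p \<in> tplus \<Phi>" and "p \<in> tminus \<Phi>" for p
  proof -
    have "prov_from (tplus \<Phi>) (Or p (Next (Dia p)))"
      by (rule prov_from_rule[OF prov_Dia_unfold prov_from.hyp[OF that(1)]])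
    then show ?thesis using prime_type_Or[OF assms] that(2) minus by blast
  qed
  moreover have "Next (Dia p) \<notin> tplus \<Phi>" if "Dia p \<notin> tplus \<Phi>" for p
    using that prime_type_closed[OF assms prov_from_rule[OF prov_Next_Dia_imp_Dia prov_from.hyp]]
    by blast
  ultimately show ?thesis
    unfolding type_S_def succ_def minus by auto
qed

lemma type_S_eq_succ:
  assumes "prime_type \<Phi>" and "prime_type \<Psi>" and "type_S \<Phi> \<Psi>"
  shows "\<Psi> = succ \<Phi>"
proof -
  have "tplus \<Psi> = {p. Next p \<in> tplus \<Phi>}"
    using assms(3) prime_type_tminus[OF assms(1)] prime_type_tminus[OF assms(2)]
    unfolding type_S_def by blast
  then have "tplus \<Psi> = tplus (succ \<Phi>)" by (simp add: succ_def)
  then show ?thesis by (rule prime_type_eqI[OF assms(2) prime_type_succ[OF assms(1)]])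
qed

lemma partial_order_canonical: "partial_order_on' Wc le_c"
  unfolding partial_order_on'_def Wc_def le_c_def type_le_def
proof (intro conjI ballI impI)
  fix \<Phi> \<Psi> assume "\<Phi> \<in> {\<Phi>. prime_type \<Phi>}" "\<Psi> \<in> {\<Phi>. prime_type \<Phi>}"
    and "tplus \<Phi> \<subseteq> tplus \<Psi>" "tplus \<Psi> \<subseteq> tplus \<Phi>"
  then show "\<Phi> = \<Psi>" by (intro prime_type_eqI) auto
qed auto

lemma labelled_frame_canonical: "labelled_frame UNIV Wc le_c l_c"
  unfolding labelled_frame_def
  using partial_order_canonical prime_type_is_type prime_type_imp_witness
  by (simp add: Wc_def le_c_def l_c_def)

lemma deterministic_canonical: "deterministic Wc S_c"
  unfolding deterministic_def Wc_def S_c_def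
proof
  fix \<Phi> assume "\<Phi> \<in> {\<Phi>. prime_type \<Phi>}"
  then show "\<exists>!\<Psi>. \<Psi> \<in> {\<Phi>. prime_type \<Phi>} \<and> type_S \<Phi> \<Psi>"
    using prime_type_succ type_S_succ type_S_eq_succ by (intro ex1I[of _ "succ \<Phi>"]) auto
qed

lemma forward_confluent_canonical: "forward_confluent Wc le_c S_c"
  unfolding forward_confluent_def Wc_def S_c_def le_c_def
proof (intro ballI impI)
  fix \<Phi> \<Phi>' \<Psi>
  assume "\<Phi> \<in> {\<Phi>. prime_type \<Phi>}" "\<Phi>' \<in> {\<Phi>. prime_type \<Phi>}" "\<Psi> \<in> {\<Phi>. prime_type \<Phi>}"
    and "type_le \<Phi> \<Phi>' \<and> type_S \<Phi> \<Psi>"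
  moreover from this have "\<Psi> = succ \<Phi>" by (simp add: type_S_eq_succ)
  ultimately show "\<exists>\<Psi>'\<in>{\<Phi>. prime_type \<Phi>}. type_le \<Psi> \<Psi>' \<and> type_S \<Phi>' \<Psi>'"
    by (intro bexI[of _ "succ \<Phi>'"]) (simp_all add: succ_mono prime_type_succ type_S_succ)
qed

theorem proposition4p4:
  shows "weak_quasimodel UNIV Wc le_c S_c l_c \<and> deterministic Wc S_c"
  unfolding weak_quasimodel_def sensible_def
  using labelled_frame_canonical forward_confluent_canonical deterministic_canonical
  by (simp add: S_c_def l_c_def)

end
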